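(* Let $G$ be a finite graph with no isolated vertices. If the order of $G$ is even, then there is no nontrivial circuit injection $f:G_M\rightarrow B$ with $B$ a binary matroid if and only if $G$ is Hamiltonian. If the order of $G$ is odd, then there is no nontrivial circuit injection $f:G_M\rightarrow B$ with $B$ a binary matroid if and only if $G$ is almost Hamiltonian.
   Context: Graphs are undirected without loops or multiple edges. The order of $G$ is its number of vertices. $G_M$ is the cycle matroid of $G$: cells are the edges of $G$ and circuits are the edge sets of circuits (cycles) of $G$. A matroid is a pair $(S,\mathscr{C})$, $S\neq\emptyset$, $\mathscr{C}\subseteq 2^S$, satisfying: (I) $A,B\in\mathscr{C}$, $A\subseteq B$ implies $A=B$; (II) $A,B\in\mathscr{C}$, $a\in A\cap B$, $b\in (A\cup B)\setminus(A\cap B)$ implies there exists $D\in\mathscr{C}$ with $D\subseteq A\cup B$, $a\notin D$, $b\in D$. A matroid $(S,\mathscr{C})$ is binary if for all $A,B\in\mathscr{C}$ the symmetric difference $A\oplus B=(A\cup B)\setminus(A\cap B)$ is a union of pairwise disjoint members of $\mathscr{C}$. A circuit injection $f:G_M\rightarrow B$ is a bijection from $E(G)$ onto the cells of $B$ sending each circuit of $G$ to a circuit of $B$; it is nontrivial if $B$ has a circuit which is not the image of any circuit of $G$. $G$ is Hamiltonian if it has a circuit containing all its vertices. A graph of order $n$ is almost Hamiltonian if every set of $n-1$ of its vertices is contained in (the vertex set of) some circuit of $G$. *)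

theory Defs
  imports Main
begin

definition simple_graph :: "'v set \<Rightarrow> 'v set set \<Rightarrow> bool" where
  "simple_graph V E \<longleftrightarrow> finite V \<and>
     (\<forall>e\<in>E. \<exists>u v. u \<noteq> v \<and> u \<in> V \<and> v \<in> V \<and> e = {u, v})"

definition no_isolated :: "'v set \<Rightarrow> 'v set set \<Rightarrow> bool" where
  "no_isolated V E \<longleftrightarrow> (\<forall>v\<in>V. \<exists>e\<in>E. v \<in> e)"

definition is_cycle :: "'v set \<Rightarrow> 'v set set \<Rightarrow> 'v list \<Rightarrow> bool" where
  "is_cycle V E vs \<longleftrightarrow> distinct vs \<and> length vs \<ge> 3 \<and> set vs \<subseteq> V \<and>
     (\<forall>i < length vs. {vs ! i, vs ! ((i + 1) mod length vs)} \<in> E)"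

definition cycle_edges :: "'v list \<Rightarrow> 'v set set" where
  "cycle_edges vs = {{vs ! i, vs ! ((i + 1) mod length vs)} | i. i < length vs}"

text \<open>Circuits of the cycle matroid G_M: edge sets of cycles of G.\<close>
definition graph_circuits :: "'v set \<Rightarrow> 'v set set \<Rightarrow> 'v set set set" where
  "graph_circuits V E = {cycle_edges vs | vs. is_cycle V E vs}"

definition matroid :: "'c set \<Rightarrow> 'c set set \<Rightarrow> bool" where
  "matroid S \<C> \<longleftrightarrow> S \<noteq> {} \<and> \<C> \<subseteq> Pow S \<and>
     (\<forall>A\<in>\<C>. \<forall>B\<in>\<C>. A \<subseteq> B \<longrightarrow> A = B) \<and>
     (\<forall>A\<in>\<C>. \<forall>B\<in>\<C>. \<forall>a\<in>A \<inter> B. \<forall>b\<in>(A \<union> B) - (A \<inter> B).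
        \<exists>D\<in>\<C>. D \<subseteq> A \<union> B \<and> a \<notin> D \<and> b \<in> D)"

definition binary_matroid :: "'c set \<Rightarrow> 'c set set \<Rightarrow> bool" where
  "binary_matroid S \<C> \<longleftrightarrow> matroid S \<C> \<and>
     (\<forall>A\<in>\<C>. \<forall>B\<in>\<C>. \<exists>\<D> \<subseteq> \<C>. pairwise disjnt \<D> \<and> \<Union>\<D> = (A \<union> B) - (A \<inter> B))"

definition circuit_injection :: "'v set \<Rightarrow> 'v set set \<Rightarrow> ('v set \<Rightarrow> 'c) \<Rightarrow> 'c set \<Rightarrow> 'c set set \<Rightarrow> bool" where
  "circuit_injection V E f S \<C> \<longleftrightarrow> bij_betw f E S \<and> (\<forall>C\<in>graph_circuits V E. f ` C \<in> \<C>)"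

definition nontrivial_circuit_injection :: "'v set \<Rightarrow> 'v set set \<Rightarrow> ('v set \<Rightarrow> 'c) \<Rightarrow> 'c set \<Rightarrow> 'c set set \<Rightarrow> bool" where
  "nontrivial_circuit_injection V E f S \<C> \<longleftrightarrow> circuit_injection V E f S \<C> \<and>
     (\<exists>D\<in>\<C>. \<forall>C\<in>graph_circuits V E. f ` C \<noteq> D)"

definition hamiltonian :: "'v set \<Rightarrow> 'v set set \<Rightarrow> bool" where
  "hamiltonian V E \<longleftrightarrow> (\<exists>vs. is_cycle V E vs \<and> set vs = V)"

definition almost_hamiltonian :: "'v set \<Rightarrow> 'v set set \<Rightarrow> bool" where
  "almost_hamiltonian V E \<longleftrightarrow>
     (\<forall>U \<subseteq> V. card U = card V - 1 \<longrightarrow> (\<exists>vs. is_cycle V E vs \<and> U \<subseteq> set vs))"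

end

theory Submission
  imports Defs
begin

(* Edge sets of G form a vector space over GF(2) under symmetric difference; the odd-degree
   vertices of an edge set are its boundary, and the circuits of G are the minimal nonempty edge
   sets with empty boundary.

   Suppose H is a cycle through all vertices except possibly v, and f maps G_M into a binary
   matroid B. Adding circuits of G formed by H with a chord, or with two edges at v, reduces any
   edge set D to a set X with the same boundary that leaves H in at most one edge, an edge at v.
   If f(D) is a circuit of B then f(X) is a disjoint union of circuits of B, since B is binary.
   If X lies inside H this forces X to be empty or H, so D has empty boundary; otherwise v is
   off H and lies in the boundary of D. For a Hamiltonian H the second case is impossible; in
   the almost Hamiltonian case, choosing H for each v shows that a nonempty boundary would be
   all of V, of odd size, contradicting the handshake lemma. An edge set with empty boundary
   contains a cycle, so the circuit f(D) is the image of a circuit of G and f is trivial.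

   Conversely, let T be a nonempty set of vertices of even size lying on no cycle: T = V if the
   order is even and G is not Hamiltonian, T = V minus a vertex if the order is odd and G is not
   almost Hamiltonian. The edge sets with boundary empty or T are closed under symmetric
   difference, so their minimal nonempty members are the circuits of a binary matroid on E(G);
   they include the circuits of G, and a T-join splits into such members, one of which has
   nonempty boundary and so is not a circuit of G. A T-join exists if G is connected; otherwise
   two vertices in different components, with one edge at each, play the role of T. *)

definition sym_diff_list :: "'a set list \<Rightarrow> 'a set" where
  "sym_diff_list As = foldr sym_diff As {}"

definition degree :: "'v set set \<Rightarrow> 'v \<Rightarrow> nat" where
  "degree X v = card {e \<in> X. v \<in> e}"

definition odd_vertices :: "'v set \<Rightarrow> 'v set set \<Rightarrow> 'v set" where
  "odd_vertices V X = {v \<in> V. odd (degree X v)}"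

lemma image_sym_diff:
  "inj_on f E \<Longrightarrow> A \<subseteq> E \<Longrightarrow> B \<subseteq> E \<Longrightarrow> f ` sym_diff A B = sym_diff (f ` A) (f ` B)"
  unfolding inj_on_def by blast

lemma card_sym_diff:
  assumes "finite A" "finite B"
  shows "card (sym_diff A B) + 2 * card (A \<inter> B) = card A + card B"
proof -
  have "sym_diff A B = A \<union> B - A \<inter> B" by blast
  then have "card (sym_diff A B) = card (A \<union> B) - card (A \<inter> B)"
    using assms by (simp add: card_Diff_subset Int_lower1 le_supI1)
  moreover have "card (A \<inter> B) \<le> card (A \<union> B)"
    using assms by (intro card_mono) auto
  ultimately show ?thesis
    using card_Un_Int[OF assms] by simp
qed

lemma odd_card_sym_diff:
  "finite A \<Longrightarrow> finite B \<Longrightarrow> odd (card (sym_diff A B)) \<longleftrightarrow> odd (card A) \<noteq> odd (card B)"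
  using card_sym_diff[of A B] by presburger

lemma sym_diff_list_Nil [simp]: "sym_diff_list [] = {}"
  and sym_diff_list_Cons [simp]: "sym_diff_list (A # As) = sym_diff A (sym_diff_list As)"
  by (simp_all add: sym_diff_list_def)

lemma sym_diff_list_append: "sym_diff_list (As @ Bs) = sym_diff (sym_diff_list As) (sym_diff_list Bs)"
  by (induction As) auto

lemma sym_diff_list_subset: "set As \<subseteq> Pow E \<Longrightarrow> sym_diff_list As \<subseteq> E"
  by (induction As) auto

lemma finite_sym_diff_list: "\<forall>A\<in>set As. finite A \<Longrightarrow> finite (sym_diff_list As)"
  by (induction As) auto

lemma card_sym_diff_list_le:
  "\<forall>A\<in>set As. finite A \<Longrightarrow> card (sym_diff_list As) \<le> sum_list (map card As)"
proof (induction As)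
  case (Cons A As)
  then have "card (sym_diff A (sym_diff_list As)) \<le> card A + card (sym_diff_list As)"
    using card_sym_diff[of A "sym_diff_list As"] finite_sym_diff_list by fastforce
  with Cons show ?case by simp
qed simp

lemma image_sym_diff_list:
  "inj_on f E \<Longrightarrow> set As \<subseteq> Pow E \<Longrightarrow> f ` sym_diff_list As = sym_diff_list (map ((`) f) As)"
proof (induction As)
  case (Cons A As)
  then show ?case
    using image_sym_diff[of f E A "sym_diff_list As"] sym_diff_list_subset[of As E] by simp
qed simp

lemma sym_diff_list_disjoint:
  "distinct As \<Longrightarrow> pairwise disjnt (set As) \<Longrightarrow> sym_diff_list As = \<Union>(set As)"
proof (induction As)
  case (Cons A As)
  then have "sym_diff_list As = \<Union>(set As)" "A \<inter> \<Union>(set As) = {}"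
    by (auto simp: pairwise_insert disjnt_def)
  then show ?case by auto
qed simp

lemma sum_list_card_disjoint:
  "distinct As \<Longrightarrow> pairwise disjnt (set As) \<Longrightarrow> \<forall>A\<in>set As. finite A
     \<Longrightarrow> sum_list (map card As) = card (\<Union>(set As))"
proof (induction As)
  case (Cons A As)
  then have "sum_list (map card As) = card (\<Union>(set As))" "A \<inter> \<Union>(set As) = {}"
    by (auto simp: pairwise_insert disjnt_def)
  with Cons.prems show ?case by (simp add: card_Un_disjoint)
qed simp

lemma odd_vertices_sym_diff:
  assumes "finite X" "finite Y"
  shows "odd_vertices V (sym_diff X Y) = sym_diff (odd_vertices V X) (odd_vertices V Y)"
proof (rule set_eqI)
  fix v
  have incident: "{e \<in> sym_diff X Y. v \<in> e} = sym_diff {e \<in> X. v \<in> e} {e \<in> Y. v \<in> e}"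
    by blast
  have "odd (degree (sym_diff X Y) v) \<longleftrightarrow> odd (degree X v) \<noteq> odd (degree Y v)"
    unfolding degree_def incident using assms by (intro odd_card_sym_diff) auto
  then show "v \<in> odd_vertices V (sym_diff X Y) \<longleftrightarrow> v \<in> sym_diff (odd_vertices V X) (odd_vertices V Y)"
    unfolding odd_vertices_def by blast
qed

lemma odd_vertices_empty [simp]: "odd_vertices V {} = {}"
  by (simp add: odd_vertices_def degree_def)

lemma degree_outside:
  assumes "\<forall>e\<in>X. u \<notin> e"
  shows "degree X u = 0"
proof -
  have "{e \<in> X. u \<in> e} = {}" using assms by blast
  then show ?thesis unfolding degree_def by (simp only: card.empty)
qed

lemma odd_vertices_Union_disjoint:
  "finite \<D> \<Longrightarrow> pairwise disjnt \<D> \<Longrightarrow> \<forall>D\<in>\<D>. finite D \<and> odd_vertices V D = {}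
     \<Longrightarrow> odd_vertices V (\<Union>\<D>) = {}"
proof (induction \<D> rule: finite_induct)
  case (insert D \<D>)
  then have IH: "odd_vertices V (\<Union>\<D>) = {}" and "D \<inter> \<Union>\<D> = {}"
    by (auto simp: pairwise_insert disjnt_def)
  then have "\<Union>(insert D \<D>) = sym_diff D (\<Union>\<D>)"
    by blast
  then have "odd_vertices V (\<Union>(insert D \<D>)) = sym_diff (odd_vertices V D) (odd_vertices V (\<Union>\<D>))"
    using insert by (simp only:) (intro odd_vertices_sym_diff, auto)
  with insert.prems IH show ?case
    by simp
qed simp

lemma simple_graph_finite_edges: "simple_graph V E \<Longrightarrow> finite E"
proof -
  assume "simple_graph V E"
  then have "E \<subseteq> Pow V" "finite V"
    unfolding simple_graph_def by auto
  then show "finite E"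
    by (simp add: finite_subset)
qed

lemma simple_graph_edge: "simple_graph V E \<Longrightarrow> e \<in> E \<Longrightarrow> card e = 2 \<and> e \<subseteq> V"
  unfolding simple_graph_def by auto

lemma simple_graph_edge_at:
  "simple_graph V E \<Longrightarrow> e \<in> E \<Longrightarrow> v \<in> e \<Longrightarrow> \<exists>a. e = {v, a} \<and> a \<noteq> v \<and> a \<in> V"
  unfolding simple_graph_def by (auto simp: insert_commute)

lemma simple_graph_edgeE:
  assumes "simple_graph V E" "e \<in> E"
  obtains a b where "a \<noteq> b" "a \<in> V" "b \<in> V" "e = {a, b}"
  using assms unfolding simple_graph_def by blast

lemma even_card_odd_vertices:
  assumes g: "simple_graph V E" and X: "X \<subseteq> E"
  shows "even (card (odd_vertices V X))"
proof -
  have fV: "finite V" using g unfolding simple_graph_def by auto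
  have fX: "finite X" using simple_graph_finite_edges[OF g] X finite_subset by auto
  have "(\<Sum>v\<in>V. card {e\<in>X. v \<in> e}) = 2 * card X"
  proof (rule sum_multicount[OF fV fX], intro ballI)
    fix e assume "e \<in> X"
    then have "card e = 2" "e \<subseteq> V" using simple_graph_edge[OF g] X by auto
    then have "{v \<in> V. v \<in> e} = e" by auto
    with \<open>card e = 2\<close> show "card {v \<in> V. v \<in> e} = 2" by simp
  qed
  then show ?thesis
    unfolding odd_vertices_def degree_def using even_sum_iff[OF fV, of "\<lambda>v. card {e \<in> X. v \<in> e}"] by simp
qed

definition path_edges :: "'v list \<Rightarrow> 'v set set" where
  "path_edges ps = (\<lambda>t. {ps ! t, ps ! Suc t}) ` {..<length ps - 1}"

lemma cycle_edges_image:
  "cycle_edges vs = (\<lambda>i. {vs ! i, vs ! (Suc i mod length vs)}) ` {..<length vs}"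
  unfolding cycle_edges_def by auto

lemma is_cycle_altdef:
  "is_cycle V E vs \<longleftrightarrow> distinct vs \<and> 3 \<le> length vs \<and> set vs \<subseteq> V \<and> cycle_edges vs \<subseteq> E"
  unfolding is_cycle_def cycle_edges_def by blast

lemma cycle_edges_subset: "is_cycle V E vs \<Longrightarrow> cycle_edges vs \<subseteq> E"
  by (simp add: is_cycle_altdef)

lemma cycle_edges_closed_path:
  assumes "ps \<noteq> []"
  shows "cycle_edges ps = insert {last ps, hd ps} (path_edges ps)"
proof -
  define n where "n = length ps"
  have n: "0 < n" "last ps = ps ! (n - 1)" "hd ps = ps ! 0"
    using assms by (simp_all add: n_def last_conv_nth hd_conv_nth)
  have "cycle_edges ps = (\<lambda>i. {ps ! i, ps ! ((i + 1) mod n)}) ` insert (n - 1) {..<n - 1}"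
    unfolding cycle_edges_def n_def using n(1) n_def by (auto simp: lessThan_Suc[symmetric])
  also have "\<dots> = insert {ps ! (n - 1), ps ! 0} ((\<lambda>t. {ps ! t, ps ! Suc t}) ` {..<n - 1})"
    using n(1) by (auto simp: image_iff)
  finally show ?thesis
    using n by (simp add: path_edges_def n_def)
qed

lemma path_edges_Cons: "ps \<noteq> [] \<Longrightarrow> path_edges (v # ps) = insert {v, hd ps} (path_edges ps)"
proof -
  assume "ps \<noteq> []"
  then have "{..<length (v # ps) - 1} = insert 0 (Suc ` {..<length ps - 1})"
    using lessThan_Suc_eq_insert_0[of "length ps - 1"] by simp
  with \<open>ps \<noteq> []\<close> show ?thesis
    unfolding path_edges_def by (simp add: hd_conv_nth image_image)
qed

lemma path_edges_take: "path_edges (take n ps) \<subseteq> path_edges ps"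
  unfolding path_edges_def by auto

lemma path_edges_drop: "path_edges (drop n ps) \<subseteq> path_edges ps"
  unfolding path_edges_def by (auto simp: image_iff intro!: exI[of _ "n + _"])

lemma path_edges_subset_cycle_edges: "path_edges ps \<subseteq> cycle_edges ps"
  unfolding path_edges_def cycle_edges_def by force

lemma cycle_edge_subset_vertices: "e \<in> cycle_edges vs \<Longrightarrow> e \<subseteq> set vs"
  unfolding cycle_edges_def by (auto intro!: nth_mem mod_less_divisor)

lemma cycle_edges_nonempty: "is_cycle V E vs \<Longrightarrow> cycle_edges vs \<noteq> {}"
  unfolding is_cycle_def cycle_edges_def by (auto intro!: exI[of _ 0])

lemma Suc_mod_inj: "i < m \<Longrightarrow> j < m \<Longrightarrow> Suc i mod m = Suc j mod m \<Longrightarrow> i = j"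
  by (auto simp: mod_Suc split: if_splits)

lemma Suc_Suc_mod_neq: "i < m \<Longrightarrow> 3 \<le> m \<Longrightarrow> Suc (Suc i mod m) mod m \<noteq> i"
  by (auto simp: mod_Suc split: if_splits)

lemma Suc_mod_surj:
  assumes "k < m"
  shows "\<exists>i<m. Suc i mod m = k"
proof (cases k)
  case 0
  with assms show ?thesis
    by (intro exI[of _ "m - 1"]) auto
next
  case (Suc j)
  with assms show ?thesis
    by (intro exI[of _ j]) auto
qed

lemma cycle_edges_at_vertex:
  assumes c: "is_cycle V E vs" and i: "i < length vs"
  defines "m \<equiv> length vs"
  defines "k \<equiv> Suc i mod m"
  shows "{e \<in> cycle_edges vs. vs ! k \<in> e} = {{vs ! i, vs ! k}, {vs ! k, vs ! (Suc k mod m)}}"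
    and "{vs ! i, vs ! k} \<noteq> {vs ! k, vs ! (Suc k mod m)}"
proof -
  have d: "distinct vs" and m3: "3 \<le> m"
    using c unfolding is_cycle_def m_def by auto
  have k: "k < m" "Suc k mod m < m"
    using i m3 unfolding k_def by auto
  have "vs ! k \<in> {vs ! j, vs ! (Suc j mod m)} \<longleftrightarrow> j = i \<or> j = k" if j: "j < m" for j
  proof -
    have "Suc j mod m < m"
      using j by (intro mod_less_divisor) simp
    then have "vs ! k = vs ! j \<longleftrightarrow> j = k" "vs ! k = vs ! (Suc j mod m) \<longleftrightarrow> Suc j mod m = k"
      using d j k unfolding m_def by (auto simp: nth_eq_iff_index_eq)
    moreover have "Suc j mod m = k \<longleftrightarrow> j = i"
      using Suc_mod_inj[OF j, of i] i unfolding k_def m_def by auto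
    ultimately show ?thesis by auto
  qed
  then show "{e \<in> cycle_edges vs. vs ! k \<in> e} = {{vs ! i, vs ! k}, {vs ! k, vs ! (Suc k mod m)}}"
    unfolding cycle_edges_def m_def[symmetric] using i k unfolding k_def m_def by auto
  have "vs ! i \<noteq> vs ! k" "vs ! i \<noteq> vs ! (Suc k mod m)"
    using d i k Suc_Suc_mod_neq[OF i[folded m_def] m3] unfolding k_def m_def
    by (auto simp: nth_eq_iff_index_eq)
  then show "{vs ! i, vs ! k} \<noteq> {vs ! k, vs ! (Suc k mod m)}"
    by (auto simp: doubleton_eq_iff)
qed

lemma odd_vertices_cycle_edges:
  assumes c: "is_cycle V E vs"
  shows "odd_vertices W (cycle_edges vs) = {}"
proof -
  have "even (degree (cycle_edges vs) u)" for u
  proof (cases "u \<in> set vs")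
    case False
    then show ?thesis
      using cycle_edge_subset_vertices by (subst degree_outside) auto
  next
    case True
    then obtain k where k: "k < length vs" "u = vs ! k"
      by (auto simp: in_set_conv_nth)
    then obtain i where "i < length vs" "Suc i mod length vs = k"
      using Suc_mod_surj by blast
    then show ?thesis
      using cycle_edges_at_vertex[OF c, of i] k unfolding degree_def by simp
  qed
  then show ?thesis
    unfolding odd_vertices_def by simp
qed

lemma odd_vertices_subset_cycle: "y \<subseteq> cycle_edges vs \<Longrightarrow> odd_vertices W y \<subseteq> set vs"
proof
  fix u
  assume y: "y \<subseteq> cycle_edges vs" and "u \<in> odd_vertices W y"
  then have "0 < card {e \<in> y. u \<in> e}"
    unfolding odd_vertices_def degree_def by (simp add: odd_pos)
  then obtain e where "e \<in> y" "u \<in> e"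
    by (auto simp: card_gt_0_iff)
  with y show "u \<in> set vs"
    using cycle_edge_subset_vertices by blast
qed

lemma cycle_edges_minimal:
  assumes c: "is_cycle V E vs" and y: "y \<subseteq> cycle_edges vs" "y \<noteq> {}"
    and even: "\<forall>u\<in>set vs. even (degree y u)"
  shows "y = cycle_edges vs"
proof -
  define m where "m = length vs"
  define ce where "ce i = {vs ! i, vs ! (Suc i mod m)}" for i
  have "3 \<le> m"
    using c unfolding is_cycle_def m_def by simp
  then have m: "0 < m" by simp
  have edges: "cycle_edges vs = ce ` {..<m}"
    unfolding cycle_edges_image ce_def m_def ..
  have step: "ce (Suc i mod m) \<in> y" if i: "i < m" "ce i \<in> y" for i
  proof (rule ccontr)
    assume "ce (Suc i mod m) \<notin> y"
    moreover have "{e \<in> cycle_edges vs. vs ! (Suc i mod m) \<in> e} = {ce i, ce (Suc i mod m)}"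
      using cycle_edges_at_vertex(1)[OF c i(1)[unfolded m_def]] unfolding ce_def m_def by simp
    ultimately have "{e \<in> y. vs ! (Suc i mod m) \<in> e} = {ce i}"
      using i(2) y(1) by blast
    then have "degree y (vs ! (Suc i mod m)) = 1"
      unfolding degree_def by simp
    moreover have "vs ! (Suc i mod m) \<in> set vs"
      using m unfolding m_def by simp
    ultimately show False
      using even by fastforce
  qed
  obtain i0 where i0: "i0 < m" "ce i0 \<in> y"
    using y unfolding edges by blast
  have all: "ce ((i0 + t) mod m) \<in> y" for t
  proof (induction t)
    case (Suc t)
    then show ?case
      using step[of "(i0 + t) mod m"] m by (simp add: mod_Suc_eq)
  qed (use i0 in simp)
  have "ce j \<in> y" if "j < m" for j
    using all[of "m - i0 + j"] i0(1) that by simp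
  then have "cycle_edges vs \<subseteq> y"
    unfolding edges by blast
  with y(1) show ?thesis
    by blast
qed

lemma is_cycle_closed_path:
  assumes "distinct ps" "3 \<le> length ps" "set ps \<subseteq> V" "path_edges ps \<subseteq> E" "{last ps, hd ps} \<in> E"
  shows "is_cycle V E ps"
proof -
  have "ps \<noteq> []"
    using assms(2) by auto
  with assms show ?thesis
    by (auto simp: is_cycle_altdef cycle_edges_closed_path)
qed

lemma consecutive_in_path_edges: "Suc t < length ps \<Longrightarrow> {ps ! t, ps ! Suc t} \<in> path_edges ps"
  unfolding path_edges_def by force

lemma cycle_segment:
  assumes "distinct hs" "i < j" "j < length hs"
  defines "seg \<equiv> drop i (take (Suc j) hs)"
  shows "distinct seg" "length seg = Suc j - i" "hd seg = hs ! i" "last seg = hs ! j"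
    "set seg \<subseteq> set hs" "path_edges seg \<subseteq> cycle_edges hs"
proof -
  show "distinct seg" "length seg = Suc j - i" "set seg \<subseteq> set hs"
    using assms by (auto simp: seg_def dest: in_set_dropD in_set_takeD)
  show "hd seg = hs ! i"
    using assms by (simp add: seg_def hd_drop_conv_nth)
  show "last seg = hs ! j"
    using assms by (simp add: seg_def last_conv_nth)
  show "path_edges seg \<subseteq> cycle_edges hs"
    unfolding seg_def using path_edges_drop path_edges_take path_edges_subset_cycle_edges by blast
qed

lemma distinct_pair_indices:
  assumes "a \<in> set xs" "b \<in> set xs" "a \<noteq> b"
  obtains i j where "i < j" "j < length xs" "{a, b} = {xs ! i, xs ! j}"
proof -
  obtain i j where ij: "i < length xs" "j < length xs" "xs ! i = a" "xs ! j = b"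
    using assms by (auto simp: in_set_conv_nth)
  with assms(3) have "i \<noteq> j"
    by auto
  then have "i < j \<or> j < i"
    by linarith
  with ij that show thesis
    by (auto simp: insert_commute)
qed

lemma chord_circuit:
  assumes g: "simple_graph V E" and c: "is_cycle V E hs"
    and e: "e \<in> E" "e \<notin> cycle_edges hs" "e \<subseteq> set hs"
  shows "\<exists>C\<in>graph_circuits V E. e \<in> C \<and> C \<subseteq> insert e (cycle_edges hs)"
proof -
  obtain a b where "a \<noteq> b" "a \<in> V" "b \<in> V" "e = {a, b}"
    by (rule simple_graph_edgeE[OF g e(1)])
  then obtain i j where ij: "i < j" "j < length hs" "e = {hs ! i, hs ! j}"
    using e(3) distinct_pair_indices[of a hs b] by auto
  define seg where "seg = drop i (take (Suc j) hs)"
  have d: "distinct hs" "set hs \<subseteq> V"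
    using c by (auto simp: is_cycle_def)
  note seg = cycle_segment[OF d(1) ij(1,2), folded seg_def]
  have "j \<noteq> Suc i"
    using e(2) ij(3) path_edges_subset_cycle_edges[of hs] consecutive_in_path_edges[of i hs] ij by auto
  then have "3 \<le> length seg"
    using seg(2) ij by simp
  moreover have closing: "{last seg, hd seg} = e"
    using seg ij(3) by (simp add: insert_commute)
  ultimately have "is_cycle V E seg"
    using seg d e(1) cycle_edges_subset[OF c] by (intro is_cycle_closed_path) auto
  moreover have "0 < length seg"
    using seg(2) ij by simp
  then have "cycle_edges seg = insert e (path_edges seg)"
    using cycle_edges_closed_path[of seg] closing by simp
  ultimately show ?thesis
    using seg(6) unfolding graph_circuits_def by blast
qed

lemma ear_circuit_at_indices:
  assumes c: "is_cycle V E hs" and v: "v \<in> V" "v \<notin> set hs"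
    and ij: "i < j" "j < length hs" and e: "{v, hs ! i} \<in> E" "{v, hs ! j} \<in> E"
  shows "\<exists>C\<in>graph_circuits V E. {v, hs ! i} \<in> C \<and> {v, hs ! j} \<in> C
           \<and> C \<subseteq> cycle_edges hs \<union> {{v, hs ! i}, {v, hs ! j}}"
proof -
  define ps where "ps = v # drop i (take (Suc j) hs)"
  have d: "distinct hs" "set hs \<subseteq> V"
    using c by (auto simp: is_cycle_def)
  note seg = cycle_segment[OF d(1) ij]
  have "0 < length (drop i (take (Suc j) hs))"
    using seg(2) ij by simp
  then have ne: "drop i (take (Suc j) hs) \<noteq> []"
    using length_greater_0_conv by blast
  have ps: "distinct ps" "3 \<le> length ps" "set ps \<subseteq> V" "hd ps = v" "last ps = hs ! j"
    "path_edges ps = insert {v, hs ! i} (path_edges (drop i (take (Suc j) hs)))"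
    using seg v d ij ne by (auto simp: ps_def path_edges_Cons)
  then have "cycle_edges ps = insert {v, hs ! j} (insert {v, hs ! i} (path_edges (drop i (take (Suc j) hs))))"
    using cycle_edges_closed_path[of ps] by (simp add: ps_def insert_commute)
  moreover have "is_cycle V E ps"
    using ps seg(6) cycle_edges_subset[OF c] e by (intro is_cycle_closed_path) (auto simp: insert_commute)
  ultimately show ?thesis
    using seg(6) unfolding graph_circuits_def by blast
qed

lemma ear_circuit:
  assumes c: "is_cycle V E hs" and v: "v \<in> V" "v \<notin> set hs"
    and ab: "a \<in> set hs" "b \<in> set hs" "a \<noteq> b" and e: "{v, a} \<in> E" "{v, b} \<in> E"
  shows "\<exists>C\<in>graph_circuits V E. {v, a} \<in> C \<and> {v, b} \<in> C \<and> C \<subseteq> cycle_edges hs \<union> {{v, a}, {v, b}}"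
proof -
  obtain i j where ij: "i < j" "j < length hs" "{a, b} = {hs ! i, hs ! j}"
    using ab by (rule distinct_pair_indices)
  then have pair: "{{v, hs ! i}, {v, hs ! j}} = {{v, a}, {v, b}}"
    by (auto simp: doubleton_eq_iff)
  have "{v, hs ! i} \<in> {{v, a}, {v, b}}" "{v, hs ! j} \<in> {{v, a}, {v, b}}"
    unfolding pair[symmetric] by simp_all
  then have "{v, hs ! i} \<in> E" "{v, hs ! j} \<in> E"
    using e by auto
  then obtain C where C: "C \<in> graph_circuits V E" "{v, hs ! i} \<in> C" "{v, hs ! j} \<in> C"
    "C \<subseteq> cycle_edges hs \<union> {{v, hs ! i}, {v, hs ! j}}"
    using ear_circuit_at_indices[OF c v ij(1,2)] by blast
  have "{v, a} \<in> {{v, hs ! i}, {v, hs ! j}}" "{v, b} \<in> {{v, hs ! i}, {v, hs ! j}}"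
    unfolding pair by simp_all
  then have "{v, a} \<in> C" "{v, b} \<in> C"
    using C(2,3) by auto
  moreover have "C \<subseteq> cycle_edges hs \<union> {{v, a}, {v, b}}"
    using C(4) unfolding pair .
  ultimately show ?thesis
    using C(1) by blast
qed

lemma even_degree_other_edge:
  assumes "even (degree X w)" "{w, u} \<in> X"
  obtains e where "e \<in> X" "w \<in> e" "e \<noteq> {w, u}"
proof (rule ccontr)
  assume "\<not> thesis"
  with that assms(2) have "{e \<in> X. w \<in> e} = {{w, u}}"
    by blast
  with assms(1) show False
    unfolding degree_def by simp
qed

definition is_path :: "'v set \<Rightarrow> 'v set set \<Rightarrow> 'v list \<Rightarrow> bool" where
  "is_path V X ps \<longleftrightarrow> distinct ps \<and> set ps \<subseteq> V \<and> 2 \<le> length ps \<and> path_edges ps \<subseteq> X"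

lemma path_prefix_cycle:
  assumes p: "is_path V X ps" and X: "X \<subseteq> E"
    and j: "2 \<le> j" "j < length ps" and closing: "{ps ! j, hd ps} \<in> X"
  shows "is_cycle V E (take (Suc j) ps) \<and> cycle_edges (take (Suc j) ps) \<subseteq> X"
proof -
  define cy where "cy = take (Suc j) ps"
  have ne: "cy \<noteq> []"
    using j by (cases ps) (simp_all add: cy_def)
  have cy: "distinct cy" "length cy = Suc j" "set cy \<subseteq> V" "path_edges cy \<subseteq> X"
    using p j path_edges_take[of "Suc j" ps] set_take_subset[of "Suc j" ps]
    by (auto simp: cy_def is_path_def)
  have "{last cy, hd cy} = {ps ! j, hd ps}"
    using ne j by (simp add: cy_def last_conv_nth hd_conv_nth)
  then have "cycle_edges cy \<subseteq> X"
    using cycle_edges_closed_path[OF ne] closing cy(4) by simp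
  moreover have "is_cycle V E cy"
    using cy j X closing \<open>{last cy, hd cy} = {ps ! j, hd ps}\<close>
    by (intro is_cycle_closed_path) auto
  ultimately show ?thesis
    unfolding cy_def by blast
qed

lemma longest_path_exists:
  assumes "finite V" "a \<noteq> b" "a \<in> V" "b \<in> V" "{a, b} \<in> X"
  obtains ps where "is_path V X ps" "\<And>qs. is_path V X qs \<Longrightarrow> length qs \<le> length ps"
proof -
  have "is_path V X [a, b]"
    using assms by (simp add: is_path_def path_edges_def lessThan_Suc)
  moreover have "length ps < Suc (card V)" if "is_path V X ps" for ps
    using that distinct_card[of ps] card_mono[OF assms(1), of "set ps"] by (simp add: is_path_def)
  ultimately show thesis
    using ex_has_greatest_nat[of "is_path V X" "[a, b]" length "Suc (card V)"] that by blast
qed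

lemma even_edge_set_contains_cycle:
  assumes g: "simple_graph V E" and X: "X \<subseteq> E" "X \<noteq> {}"
    and even: "\<forall>u\<in>V. even (degree X u)"
  obtains vs where "is_cycle V E vs" "cycle_edges vs \<subseteq> X"
proof -
  obtain e where "e \<in> X"
    using X(2) by blast
  with X(1) obtain a b where "a \<noteq> b" "a \<in> V" "b \<in> V" "e = {a, b}"
    using simple_graph_edgeE[OF g] by blast
  with \<open>e \<in> X\<close> g obtain ps where ps: "is_path V X ps"
    and longest: "\<And>qs. is_path V X qs \<Longrightarrow> length qs \<le> length ps"
    using longest_path_exists[of V a b X] unfolding simple_graph_def by blast
  then have ne: "ps \<noteq> []" and psV: "set ps \<subseteq> V"
    by (auto simp: is_path_def)
  have first: "{hd ps, ps ! 1} \<in> X"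
    using ps ne consecutive_in_path_edges[of 0 ps] by (auto simp: is_path_def hd_conv_nth)
  have "even (degree X (hd ps))"
    using even ne psV hd_in_set[of ps] by blast
  then obtain e where e: "e \<in> X" "hd ps \<in> e" "e \<noteq> {hd ps, ps ! 1}"
    using first by (rule even_degree_other_edge)
  with X have "e \<in> E"
    by blast
  from simple_graph_edge_at[OF g this e(2)]
  obtain z where z: "e = {hd ps, z}" "z \<noteq> hd ps" "z \<in> V"
    by blast
  have "{z, hd ps} \<in> X"
    using e z by (simp add: insert_commute)
  then have "z \<in> set ps"
    using longest[of "z # ps"] ps z path_edges_Cons[OF ne, of z] by (auto simp: is_path_def)
  then obtain j where j: "j < length ps" "ps ! j = z"
    by (auto simp: in_set_conv_nth)
  moreover have "j \<noteq> 0" "j \<noteq> 1"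
    using j z e ne by (auto simp: hd_conv_nth)
  moreover have "{ps ! j, hd ps} \<in> X"
    using e z j by (simp add: insert_commute)
  ultimately have "is_cycle V E (take (Suc j) ps) \<and> cycle_edges (take (Suc j) ps) \<subseteq> X"
    using ps X by (intro path_prefix_cycle) auto
  with that show thesis
    by blast
qed

abbreviation adjacent :: "'v set set \<Rightarrow> 'v \<Rightarrow> 'v \<Rightarrow> bool" where
  "adjacent E x y \<equiv> {x, y} \<in> E"

lemma adjacent_rtranclp_sym: "(adjacent E)\<^sup>*\<^sup>* x y \<Longrightarrow> (adjacent E)\<^sup>*\<^sup>* y x"
  using symp_rtranclp[of "adjacent E"] by (auto simp: symp_def insert_commute)

lemma path_edges_reach:
  "path_edges ps \<subseteq> E \<Longrightarrow> t < length ps \<Longrightarrow> (adjacent E)\<^sup>*\<^sup>* (ps ! 0) (ps ! t)"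
proof (induction t)
  case (Suc t)
  then have "(adjacent E)\<^sup>*\<^sup>* (ps ! 0) (ps ! t)" "adjacent E (ps ! t) (ps ! Suc t)"
    using consecutive_in_path_edges[of t ps] by auto
  then show ?case
    by (rule rtranclp.rtrancl_into_rtrancl)
qed simp

lemma cycle_vertices_connected:
  assumes c: "is_cycle V E vs" and "a \<in> set vs" "b \<in> set vs"
  shows "(adjacent E)\<^sup>*\<^sup>* a b"
proof -
  have "path_edges vs \<subseteq> E"
    using path_edges_subset_cycle_edges cycle_edges_subset[OF c] by blast
  then have reach: "(adjacent E)\<^sup>*\<^sup>* (vs ! 0) x" if "x \<in> set vs" for x
    using that path_edges_reach by (auto simp: in_set_conv_nth)
  show ?thesis
    using rtranclp_trans[OF adjacent_rtranclp_sym[OF reach] reach] assms(2,3) .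
qed

lemma matroid_circuit_subset:
  assumes "matroid S \<C>" "C \<in> \<C>"
  shows "C \<subseteq> S"
proof -
  have "\<C> \<subseteq> Pow S"
    using assms(1) by (simp add: matroid_def)
  with assms(2) show ?thesis
    by blast
qed

lemma matroid_circuit_finite:
  assumes "matroid S \<C>" "finite S" "C \<in> \<C>"
  shows "finite C"
  using finite_subset[OF matroid_circuit_subset[OF assms(1,3)] assms(2)] .

lemma matroid_circuit_antichain:
  assumes "matroid S \<C>" "A \<in> \<C>" "B \<in> \<C>" "A \<subseteq> B"
  shows "A = B"
proof -
  have "\<forall>A\<in>\<C>. \<forall>B\<in>\<C>. A \<subseteq> B \<longrightarrow> A = B"
    using assms(1) by (simp add: matroid_def)
  with assms(2-4) show ?thesis
    by blast
qed

definition disjoint_union_of :: "'a set set \<Rightarrow> 'a set \<Rightarrow> bool" where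
  "disjoint_union_of \<C> X \<longleftrightarrow> (\<exists>\<D>\<subseteq>\<C>. pairwise disjnt \<D> \<and> \<Union>\<D> = X)"

lemma binary_matroid_sym_diff:
  "binary_matroid S \<C> \<Longrightarrow> A \<in> \<C> \<Longrightarrow> B \<in> \<C> \<Longrightarrow> disjoint_union_of \<C> (sym_diff A B)"
proof -
  have "sym_diff A B = A \<union> B - A \<inter> B"
    by blast
  then show "binary_matroid S \<C> \<Longrightarrow> A \<in> \<C> \<Longrightarrow> B \<in> \<C> \<Longrightarrow> ?thesis"
    unfolding binary_matroid_def disjoint_union_of_def by (simp only:)
qed

lemma disjoint_family_as_list:
  assumes "finite \<B>" "pairwise disjnt \<B>" "\<forall>B\<in>\<B>. finite B"
  obtains bs where "set bs = \<B>" "sym_diff_list bs = \<Union>\<B>" "sum_list (map card bs) = card (\<Union>\<B>)"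
proof -
  obtain bs where bs: "set bs = \<B>" "distinct bs"
    using finite_distinct_list[OF assms(1)] by blast
  show thesis
  proof (rule that[OF bs(1)])
    show "sym_diff_list bs = \<Union>\<B>"
      using sym_diff_list_disjoint[OF bs(2)] bs(1) assms(2) by simp
    show "sum_list (map card bs) = card (\<Union>\<B>)"
      using sum_list_card_disjoint[OF bs(2)] bs(1) assms(2,3) by simp
  qed
qed

lemma binary_sym_diff_shorter:
  assumes b: "binary_matroid S \<C>" and S: "finite S"
    and C: "C \<in> \<C>" and D: "D \<in> \<C>" and CD: "C \<inter> D \<noteq> {}"
  obtains ds where "set ds \<subseteq> \<C>" "sym_diff_list ds = sym_diff C D"
    "sum_list (map card ds) < card C + card D"
proof -
  have m: "matroid S \<C>"
    using b by (simp add: binary_matroid_def)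
  obtain \<D> where \<D>: "\<D> \<subseteq> \<C>" "pairwise disjnt \<D>" "\<Union>\<D> = sym_diff C D"
    using binary_matroid_sym_diff[OF b C D] unfolding disjoint_union_of_def by blast
  have fin: "finite C" "finite D"
    using matroid_circuit_finite[OF m S] C D by auto
  then have "finite \<D>"
    using \<D>(3) by (simp add: finite_UnionD)
  moreover note \<D>(2)
  moreover have "\<forall>B\<in>\<D>. finite B"
    using \<D>(1) matroid_circuit_finite[OF m S] by blast
  ultimately obtain ds where ds: "set ds = \<D>" "sym_diff_list ds = \<Union>\<D>"
    "sum_list (map card ds) = card (\<Union>\<D>)"
    by (rule disjoint_family_as_list)
  have "0 < card (C \<inter> D)"
    using CD fin by (simp add: card_gt_0_iff)
  then have "card (sym_diff C D) < card C + card D"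
    using card_sym_diff[OF fin] by linarith
  with ds(3) \<D>(3) have "sum_list (map card ds) < card C + card D"
    by simp
  moreover have "set ds \<subseteq> \<C>"
    using ds(1) \<D>(1) by simp
  moreover have "sym_diff_list ds = sym_diff C D"
    using ds(2) \<D>(3) by simp
  ultimately show thesis
    by (intro that)
qed

lemma disjoint_family_minus:
  assumes "finite \<B>" "pairwise disjnt \<B>" "\<forall>B\<in>\<B>. finite B" "D \<in> \<B>"
  obtains bs where "set bs \<subseteq> \<B>" "sym_diff_list bs = \<Union>\<B> - D"
    "sum_list (map card bs) + card D = card (\<Union>\<B>)"
proof -
  have "finite (\<B> - {D})" "pairwise disjnt (\<B> - {D})" "\<forall>B\<in>\<B> - {D}. finite B"
    using assms(1-3) pairwise_subset[OF assms(2)] by auto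
  then obtain bs where bs: "set bs = \<B> - {D}" "sym_diff_list bs = \<Union>(\<B> - {D})"
    "sum_list (map card bs) = card (\<Union>(\<B> - {D}))"
    by (rule disjoint_family_as_list)
  have disj: "D \<inter> \<Union>(\<B> - {D}) = {}"
    using assms(2,4) unfolding pairwise_def disjnt_def by blast
  then have rest: "\<Union>(\<B> - {D}) = \<Union>\<B> - D"
    using assms(4) by blast
  have "\<Union>\<B> = D \<union> \<Union>(\<B> - {D})"
    using assms(4) by blast
  moreover have "finite D" "finite (\<Union>(\<B> - {D}))"
    using assms(1,3,4) by auto
  ultimately have "card (\<Union>\<B>) = card D + card (\<Union>(\<B> - {D}))"
    using card_Un_disjoint[OF _ _ disj] by simp
  show thesis
  proof (rule that)
    show "set bs \<subseteq> \<B>"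
      using bs(1) by blast
    show "sym_diff_list bs = \<Union>\<B> - D"
      using bs(2) rest by simp
    show "sum_list (map card bs) + card D = card (\<Union>\<B>)"
      using bs(3) \<open>card (\<Union>\<B>) = card D + card (\<Union>(\<B> - {D}))\<close> by simp
  qed
qed

lemma binary_sym_diff_Union_shorter:
  assumes b: "binary_matroid S \<C>" and S: "finite S" and C: "C \<in> \<C>"
    and \<B>: "\<B> \<subseteq> \<C>" "pairwise disjnt \<B>" and D: "D \<in> \<B>" "C \<inter> D \<noteq> {}"
  obtains ds where "set ds \<subseteq> \<C>" "sym_diff_list ds = sym_diff C (\<Union>\<B>)"
    "sum_list (map card ds) < card C + card (\<Union>\<B>)"
proof -
  have m: "matroid S \<C>"
    using b by (simp add: binary_matroid_def)
  have "\<C> \<subseteq> Pow S"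
    using m by (simp add: matroid_def)
  then have "finite \<B>" "\<forall>B\<in>\<B>. finite B"
    using \<B>(1) S matroid_circuit_finite[OF m S] by (auto intro: finite_subset)
  then obtain bs where bs: "set bs \<subseteq> \<B>" "sym_diff_list bs = \<Union>\<B> - D"
    "sum_list (map card bs) + card D = card (\<Union>\<B>)"
    using disjoint_family_minus[OF _ \<B>(2) _ D(1)] by blast
  have "D \<in> \<C>"
    using D(1) \<B>(1) by blast
  then obtain ds where ds: "set ds \<subseteq> \<C>" "sym_diff_list ds = sym_diff C D"
    "sum_list (map card ds) < card C + card D"
    by (rule binary_sym_diff_shorter[OF b S C _ D(2)])
  have "sym_diff C (\<Union>\<B>) = sym_diff (sym_diff C D) (\<Union>\<B> - D)"
    using D(1) by blast
  then have "sym_diff_list (ds @ bs) = sym_diff C (\<Union>\<B>)"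
    using ds(2) bs(2) by (simp add: sym_diff_list_append)
  moreover have "sum_list (map card (ds @ bs)) < card C + card (\<Union>\<B>)"
    using ds(3) bs(3) by simp
  moreover have "set (ds @ bs) \<subseteq> \<C>"
    using ds(1) bs(1) \<B>(1) by auto
  ultimately show thesis
    by (intro that)
qed

lemma sym_diff_list_empty_circuits:
  assumes m: "matroid S \<C>" and "{} \<in> \<C>"
  shows "set As \<subseteq> \<C> \<Longrightarrow> sym_diff_list As = {}"
proof -
  have "A = {}" if "A \<in> \<C>" for A
    using matroid_circuit_antichain[OF m assms(2) that] by simp
  then show "set As \<subseteq> \<C> \<Longrightarrow> sym_diff_list As = {}"
    by (induction As) auto
qed

lemma disjoint_union_of_insert:
  assumes "C \<in> \<C>" "\<B> \<subseteq> \<C>" "pairwise disjnt \<B>" "\<forall>D\<in>\<B>. C \<inter> D = {}"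
  shows "disjoint_union_of \<C> (sym_diff C (\<Union>\<B>))"
proof -
  have "pairwise disjnt (insert C \<B>)" "\<Union>(insert C \<B>) = sym_diff C (\<Union>\<B>)"
    using assms(3,4) by (auto simp: pairwise_insert disjnt_def)
  with assms(1,2) show ?thesis
    unfolding disjoint_union_of_def by (intro exI[of _ "insert C \<B>"]) auto
qed

lemma binary_sym_diff_Union_cases:
  assumes b: "binary_matroid S \<C>" and S: "finite S" and C: "C \<in> \<C>"
    and \<B>: "\<B> \<subseteq> \<C>" "pairwise disjnt \<B>"
  obtains "disjoint_union_of \<C> (sym_diff C (\<Union>\<B>))"
  | ds where "set ds \<subseteq> \<C>" "sym_diff_list ds = sym_diff C (\<Union>\<B>)"
      "sum_list (map card ds) < card C + card (\<Union>\<B>)"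
proof (cases "\<forall>D\<in>\<B>. C \<inter> D = {}")
  case True
  then show thesis
    using disjoint_union_of_insert[OF C \<B>] that(1) by blast
next
  case False
  then show thesis
    using binary_sym_diff_Union_shorter[OF b S C \<B>] that(2) by blast
qed

lemma binary_matroid_sym_diff_list:
  assumes b: "binary_matroid S \<C>" and S: "finite S"
  shows "set As \<subseteq> \<C> \<Longrightarrow> disjoint_union_of \<C> (sym_diff_list As)"
proof (induction "sum_list (map card As)" arbitrary: As rule: less_induct)
  case (less As)
  have m: "matroid S \<C>"
    using b by (simp add: binary_matroid_def)
  show ?case
  proof (cases As)
    case Nil
    then show ?thesis
      unfolding disjoint_union_of_def by (intro exI[of _ "{}"]) auto
  next
    case (Cons C As')
    have C: "C \<in> \<C>" "finite C" and As': "set As' \<subseteq> \<C>"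
      using less.prems Cons matroid_circuit_finite[OF m S] by auto
    show ?thesis
    proof (cases "C = {}")
      case True
      then show ?thesis
        using sym_diff_list_empty_circuits[OF m _ less.prems] C(1)
        unfolding disjoint_union_of_def by (intro exI[of _ "{}"]) auto
    next
      case False
      then have "sum_list (map card As') < sum_list (map card As)"
        using C(2) Cons by (simp add: card_gt_0_iff)
      from less.hyps[OF this As'] obtain \<B>
        where \<B>: "\<B> \<subseteq> \<C>" "pairwise disjnt \<B>" "\<Union>\<B> = sym_diff_list As'"
        unfolding disjoint_union_of_def by blast
      have "card (\<Union>\<B>) \<le> sum_list (map card As')"
        using \<B>(3) card_sym_diff_list_le[of As'] As' matroid_circuit_finite[OF m S] by auto
      then show ?thesis
      proof (cases rule: binary_sym_diff_Union_cases[OF b S C(1) \<B>(1,2)])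
        case 1
        then show ?thesis
          using Cons \<B>(3) by simp
      next
        case (2 ds)
        with Cons \<open>card (\<Union>\<B>) \<le> sum_list (map card As')\<close>
        have "sum_list (map card ds) < sum_list (map card As)"
          by simp
        then show ?thesis
          using less.hyps[OF _ 2(1)] 2(2) \<B>(3) Cons by simp
      qed
    qed
  qed
qed
lemma graph_circuit_subset: "C \<in> graph_circuits V E \<Longrightarrow> C \<subseteq> E"
  unfolding graph_circuits_def using cycle_edges_subset by blast

lemma odd_vertices_graph_circuit: "C \<in> graph_circuits V E \<Longrightarrow> odd_vertices W C = {}"
  unfolding graph_circuits_def using odd_vertices_cycle_edges by blast

lemma odd_vertices_sym_diff_list_circuits:
  "finite E \<Longrightarrow> set L \<subseteq> graph_circuits V E \<Longrightarrow> odd_vertices W (sym_diff_list L) = {}"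
proof (induction L)
  case (Cons C L)
  have "C \<subseteq> E"
    using Cons.prems graph_circuit_subset[of C V E] by simp
  moreover have "set L \<subseteq> Pow E"
    using Cons.prems graph_circuit_subset[of _ V E] by auto
  then have "sym_diff_list L \<subseteq> E"
    by (rule sym_diff_list_subset)
  ultimately have "odd_vertices W (sym_diff C (sym_diff_list L)) = sym_diff (odd_vertices W C) {}"
    using Cons by (subst odd_vertices_sym_diff) (auto intro: finite_subset)
  with Cons.prems show ?case
    using odd_vertices_graph_circuit[of C V E W] by simp
qed simp

lemma card_sym_diff_outside_less:
  assumes "finite (X - H)" "C \<subseteq> H \<union> F" "F \<subseteq> C" "F \<subseteq> X - H" "F \<noteq> {}"
  shows "card (sym_diff X C - H) < card (X - H)"
proof -
  have "sym_diff X C - H = (X - H) - F"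
    using assms(2-4) by blast
  moreover have "card ((X - H) - F) < card (X - H)"
    using assms(1,4,5) by (intro psubset_card_mono) auto
  ultimately show ?thesis
    by simp
qed

lemma reduce_modulo_circuits_step:
  assumes g: "simple_graph V E" and c: "is_cycle V E hs" and cov: "V - {v} \<subseteq> set hs"
    and X: "X \<subseteq> E"
    and far: "\<not> (X - cycle_edges hs \<subseteq> {e. v \<in> e \<and> v \<notin> set hs} \<and> card (X - cycle_edges hs) \<le> 1)"
  obtains C where "C \<in> graph_circuits V E" "card (sym_diff X C - cycle_edges hs) < card (X - cycle_edges hs)"
proof -
  define H where "H = cycle_edges hs"
  have fin: "finite (X - H)"
    using simple_graph_finite_edges[OF g] X finite_subset by blast
  show thesis
  proof (cases "\<exists>e\<in>X - H. e \<subseteq> set hs")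
    case True
    then obtain e where e: "e \<in> X - H" "e \<subseteq> set hs"
      by blast
    then obtain C where "C \<in> graph_circuits V E" "e \<in> C" "C \<subseteq> insert e H"
      using chord_circuit[OF g c] X unfolding H_def by blast
    with fin e show thesis
      using card_sym_diff_outside_less[of X H C "{e}"] that unfolding H_def by auto
  next
    case False
    have star: "v \<in> e \<and> v \<notin> set hs" if e: "e \<in> X - H" for e
    proof -
      have "e \<subseteq> V"
        using simple_graph_edge[OF g] X e by blast
      moreover have "\<not> e \<subseteq> set hs"
        using False e by blast
      ultimately show ?thesis
        using cov by blast
    qed
    then have "X - H \<subseteq> {e. v \<in> e \<and> v \<notin> set hs}"
      by blast
    with far obtain e1 e2 where e12: "e1 \<in> X - H" "e2 \<in> X - H" "e1 \<noteq> e2"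
      using card_le_Suc0_iff_eq[OF fin] unfolding H_def by auto
    then have v: "v \<in> e1" "v \<in> e2" "v \<notin> set hs" "e1 \<in> E" "e2 \<in> E"
      using star X by blast+
    then have "v \<in> V"
      using simple_graph_edge[OF g] by blast
    obtain a b where a: "e1 = {v, a}" "a \<noteq> v" "a \<in> V" and b: "e2 = {v, b}" "b \<noteq> v" "b \<in> V"
      using simple_graph_edge_at[OF g v(4,1)] simple_graph_edge_at[OF g v(5,2)] by blast
    then have "a \<in> set hs" "b \<in> set hs" "a \<noteq> b"
      using cov e12(3) by auto
    then obtain C where "C \<in> graph_circuits V E" "e1 \<in> C" "e2 \<in> C" "C \<subseteq> H \<union> {e1, e2}"
      using ear_circuit[OF c \<open>v \<in> V\<close> v(3)] v(4,5) a(1) b(1) unfolding H_def by blast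
    with fin e12 show thesis
      using card_sym_diff_outside_less[of X H C "{e1, e2}"] that unfolding H_def by auto
  qed
qed

lemma sym_diff_graph_circuits:
  assumes E: "finite E" and D: "D \<subseteq> E" and L: "set L \<subseteq> graph_circuits V E"
  shows "sym_diff D (sym_diff_list L) \<subseteq> E"
    and "odd_vertices W (sym_diff D (sym_diff_list L)) = odd_vertices W D"
proof -
  have "sym_diff_list L \<subseteq> E"
    using L graph_circuit_subset[of _ V E] by (intro sym_diff_list_subset) auto
  then show "sym_diff D (sym_diff_list L) \<subseteq> E"
    using D by blast
  have "odd_vertices W (sym_diff D (sym_diff_list L))
      = sym_diff (odd_vertices W D) (odd_vertices W (sym_diff_list L))"
    using D \<open>sym_diff_list L \<subseteq> E\<close> E by (intro odd_vertices_sym_diff) (auto intro: finite_subset)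
  then show "odd_vertices W (sym_diff D (sym_diff_list L)) = odd_vertices W D"
    using odd_vertices_sym_diff_list_circuits[OF E L] by simp
qed

lemma reduce_modulo_circuits:
  assumes g: "simple_graph V E" and c: "is_cycle V E hs" and cov: "V - {v} \<subseteq> set hs"
  shows "X \<subseteq> E \<Longrightarrow> \<exists>L. set L \<subseteq> graph_circuits V E
    \<and> sym_diff X (sym_diff_list L) - cycle_edges hs \<subseteq> {e. v \<in> e \<and> v \<notin> set hs}
    \<and> card (sym_diff X (sym_diff_list L) - cycle_edges hs) \<le> 1"
proof (induction "card (X - cycle_edges hs)" arbitrary: X rule: less_induct)
  case (less X)
  show ?case
  proof (cases "X - cycle_edges hs \<subseteq> {e. v \<in> e \<and> v \<notin> set hs} \<and> card (X - cycle_edges hs) \<le> 1")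
    case True
    then show ?thesis
      by (intro exI[of _ "[]"]) simp
  next
    case False
    then obtain C where C: "C \<in> graph_circuits V E"
      "card (sym_diff X C - cycle_edges hs) < card (X - cycle_edges hs)"
      using reduce_modulo_circuits_step[OF g c cov less.prems] by blast
    moreover have "sym_diff X C \<subseteq> E"
      using less.prems graph_circuit_subset[OF C(1)] by blast
    ultimately obtain L where "set L \<subseteq> graph_circuits V E"
      "sym_diff (sym_diff X C) (sym_diff_list L) - cycle_edges hs \<subseteq> {e. v \<in> e \<and> v \<notin> set hs}"
      "card (sym_diff (sym_diff X C) (sym_diff_list L) - cycle_edges hs) \<le> 1"
      using less.hyps by blast
    moreover have "sym_diff (sym_diff X C) (sym_diff_list L) = sym_diff X (sym_diff_list (C # L))"
      by auto
    ultimately show ?thesis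
      using C(1) by (intro exI[of _ "C # L"]) simp
  qed
qed

lemma disjoint_union_within_circuit:
  assumes m: "matroid S \<C>" and X: "disjoint_union_of \<C> X" and K: "K \<in> \<C>" "X \<subseteq> K"
  shows "X = {} \<or> X = K"
proof -
  obtain \<D> where \<D>: "\<D> \<subseteq> \<C>" "\<Union>\<D> = X"
    using X unfolding disjoint_union_of_def by blast
  have "D = K" if "D \<in> \<D>" for D
    using matroid_circuit_antichain[OF m _ K(1)] that \<D> K(2) by blast
  then show ?thesis
    using \<D>(2) by blast
qed

lemma circuit_injection_image_sym_diff:
  assumes g: "simple_graph V E" and b: "binary_matroid S \<C>" and ci: "circuit_injection V E f S \<C>"
    and D: "D \<subseteq> E" "f ` D \<in> \<C>" and L: "set L \<subseteq> graph_circuits V E"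
  shows "disjoint_union_of \<C> (f ` sym_diff D (sym_diff_list L))"
proof -
  have inj: "inj_on f E" and S: "S = f ` E" and circ: "\<forall>C\<in>graph_circuits V E. f ` C \<in> \<C>"
    using ci unfolding circuit_injection_def bij_betw_def by auto
  have "set (D # L) \<subseteq> Pow E"
    using D(1) L graph_circuit_subset[of _ V E] by auto
  from image_sym_diff_list[OF inj this]
  have eq: "f ` sym_diff D (sym_diff_list L) = sym_diff_list (map ((`) f) (D # L))"
    by (simp only: sym_diff_list_Cons)
  have "set (map ((`) f) (D # L)) \<subseteq> \<C>"
    using D(2) L circ by auto
  moreover have "finite S"
    using S simple_graph_finite_edges[OF g] by simp
  ultimately show ?thesis
    unfolding eq by (intro binary_matroid_sym_diff_list[OF b])
qed

lemma preimage_within_circuit_even: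
  assumes b: "binary_matroid S \<C>" and ci: "circuit_injection V E f S \<C>"
    and C: "C \<in> graph_circuits V E" and X: "X \<subseteq> C" "disjoint_union_of \<C> (f ` X)"
  shows "odd_vertices W X = {}"
proof -
  have m: "matroid S \<C>"
    using b by (simp add: binary_matroid_def)
  have inj: "inj_on f E" and "f ` C \<in> \<C>"
    using ci C unfolding circuit_injection_def bij_betw_def by auto
  then have "f ` X = {} \<or> f ` X = f ` C"
    using disjoint_union_within_circuit[OF m X(2)] X(1) by blast
  then have "X = {} \<or> X = C"
    using inj_on_image_eq_iff[OF inj] X(1) graph_circuit_subset[OF C] by blast
  then show ?thesis
    using odd_vertices_graph_circuit[OF C] by auto
qed

lemma binary_preimage_odd_vertices:
  assumes g: "simple_graph V E" and b: "binary_matroid S \<C>" and ci: "circuit_injection V E f S \<C>"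
    and c: "is_cycle V E hs" and cov: "V - {v} \<subseteq> set hs" and v: "v \<in> V"
    and D: "D \<subseteq> E" "f ` D \<in> \<C>"
  shows "odd_vertices V D = {} \<or> v \<notin> set hs \<and> v \<in> odd_vertices V D"
proof -
  define H where "H = cycle_edges hs"
  have fE: "finite E"
    using simple_graph_finite_edges[OF g] .
  obtain L where L: "set L \<subseteq> graph_circuits V E"
    "sym_diff D (sym_diff_list L) - H \<subseteq> {e. v \<in> e \<and> v \<notin> set hs}"
    "card (sym_diff D (sym_diff_list L) - H) \<le> 1"
    using reduce_modulo_circuits[OF g c cov D(1)] unfolding H_def by blast
  define X where "X = sym_diff D (sym_diff_list L)"
  have XE: "X \<subseteq> E" and odd: "odd_vertices V X = odd_vertices V D"
    unfolding X_def using sym_diff_graph_circuits[OF fE D(1) L(1)] by auto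
  have "finite (X - H)"
    using XE fE finite_subset by blast
  moreover have "card (X - H) = 0 \<or> card (X - H) = 1"
    using L(3) unfolding X_def by linarith
  ultimately consider "X \<subseteq> H" | e where "X - H = {e}"
    by (auto simp: card_1_singleton_iff)
  then show ?thesis
  proof cases
    case 1
    have "H \<in> graph_circuits V E"
      unfolding H_def graph_circuits_def using c by blast
    moreover have "disjoint_union_of \<C> (f ` X)"
      unfolding X_def by (rule circuit_injection_image_sym_diff[OF g b ci D L(1)])
    ultimately show ?thesis
      using preimage_within_circuit_even[OF b ci _ 1] odd by simp
  next
    case 2
    then have ve: "v \<in> e" "v \<notin> set hs"
      using L(2) unfolding X_def by auto
    then have "{e' \<in> X. v \<in> e'} = {e}"
      using 2 cycle_edge_subset_vertices unfolding H_def by blast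
    then have "v \<in> odd_vertices V X"
      using v unfolding odd_vertices_def degree_def by simp
    with ve odd show ?thesis
      by simp
  qed
qed

lemma circuit_injection_trivial_if_preimages_even:
  assumes g: "simple_graph V E" and m: "matroid S \<C>" and ci: "circuit_injection V E f S \<C>"
    and c: "is_cycle V E hs"
    and even: "\<And>D. D \<subseteq> E \<Longrightarrow> f ` D \<in> \<C> \<Longrightarrow> odd_vertices V D = {}"
  shows "\<not> nontrivial_circuit_injection V E f S \<C>"
proof -
  have S: "S = f ` E" and circ: "\<forall>C\<in>graph_circuits V E. f ` C \<in> \<C>"
    using ci unfolding circuit_injection_def bij_betw_def by auto
  have "\<exists>C\<in>graph_circuits V E. f ` C = K" if K: "K \<in> \<C>" for K
  proof -
    define D where "D = {e \<in> E. f e \<in> K}"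
    have "K \<subseteq> S"
      using matroid_circuit_subset[OF m K] .
    then have DE: "D \<subseteq> E" and fD: "f ` D = K"
      unfolding D_def S by auto
    have H: "cycle_edges hs \<in> graph_circuits V E" "cycle_edges hs \<noteq> {}"
      using c cycle_edges_nonempty[OF c] unfolding graph_circuits_def by auto
    have "K \<noteq> {}"
      using matroid_circuit_antichain[OF m K circ[rule_format, OF H(1)]] H(2) by auto
    then have "D \<noteq> {}"
      using fD by auto
    moreover have "\<forall>u\<in>V. even (degree D u)"
      using even[OF DE] fD K unfolding odd_vertices_def by auto
    ultimately obtain vs where vs: "is_cycle V E vs" "cycle_edges vs \<subseteq> D"
      using even_edge_set_contains_cycle[OF g DE] by blast
    then have "cycle_edges vs \<in> graph_circuits V E"
      unfolding graph_circuits_def by blast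
    moreover have "f ` cycle_edges vs = K"
      using matroid_circuit_antichain[OF m _ K] circ calculation vs(2) fD by blast
    ultimately show ?thesis
      by blast
  qed
  then show ?thesis
    unfolding nontrivial_circuit_injection_def by blast
qed

lemma hamiltonian_no_nontrivial_circuit_injection:
  assumes g: "simple_graph V E" and h: "hamiltonian V E" and b: "binary_matroid S \<C>"
  shows "\<not> nontrivial_circuit_injection V E f S \<C>"
proof
  assume nt: "nontrivial_circuit_injection V E f S \<C>"
  then have ci: "circuit_injection V E f S \<C>"
    by (simp add: nontrivial_circuit_injection_def)
  obtain hs where hs: "is_cycle V E hs" "set hs = V"
    using h unfolding hamiltonian_def by blast
  then obtain v where "v \<in> V"
    unfolding is_cycle_def by fastforce
  then have "odd_vertices V D = {}" if "D \<subseteq> E" "f ` D \<in> \<C>" for D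
    using binary_preimage_odd_vertices[OF g b ci hs(1) _ _ that] hs(2) by blast
  moreover have "matroid S \<C>"
    using b by (simp add: binary_matroid_def)
  ultimately show False
    using circuit_injection_trivial_if_preimages_even[OF g _ ci hs(1)] nt by blast
qed

lemma almost_hamiltonian_no_nontrivial_circuit_injection:
  assumes g: "simple_graph V E" and h: "almost_hamiltonian V E" and V: "V \<noteq> {}" "odd (card V)"
    and b: "binary_matroid S \<C>"
  shows "\<not> nontrivial_circuit_injection V E f S \<C>"
proof
  assume nt: "nontrivial_circuit_injection V E f S \<C>"
  then have ci: "circuit_injection V E f S \<C>"
    by (simp add: nontrivial_circuit_injection_def)
  have "finite V"
    using g by (simp add: simple_graph_def)
  then have cover: "\<exists>hs. is_cycle V E hs \<and> V - {v} \<subseteq> set hs" if "v \<in> V" for v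
    using h that unfolding almost_hamiltonian_def by (metis Diff_subset card_Diff_singleton)
  obtain hs0 where hs0: "is_cycle V E hs0"
    using cover V(1) by blast
  have "odd_vertices V D = {}" if D: "D \<subseteq> E" "f ` D \<in> \<C>" for D
  proof (rule ccontr)
    assume "odd_vertices V D \<noteq> {}"
    then have "V \<subseteq> odd_vertices V D"
      using cover binary_preimage_odd_vertices[OF g b ci _ _ _ D] by blast
    then have "odd_vertices V D = V"
      unfolding odd_vertices_def by blast
    with V(2) even_card_odd_vertices[OF g D(1)] show False
      by simp
  qed
  moreover have "matroid S \<C>"
    using b by (simp add: binary_matroid_def)
  ultimately show False
    using circuit_injection_trivial_if_preimages_even[OF g _ ci hs0] nt by blast
qed

definition minimal_nonempty :: "'a set set \<Rightarrow> 'a set set" where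
  "minimal_nonempty Z = {D \<in> Z. D \<noteq> {} \<and> (\<forall>D'\<in>Z. D' \<subseteq> D \<longrightarrow> D' = {} \<or> D' = D)}"

lemma minimal_nonempty_antichain:
  "A \<in> minimal_nonempty Z \<Longrightarrow> B \<in> minimal_nonempty Z \<Longrightarrow> A \<subseteq> B \<Longrightarrow> A = B"
  unfolding minimal_nonempty_def by blast

lemma disjoint_union_of_minimal_nonempty:
  assumes E: "finite E" and Z: "Z \<subseteq> Pow E" and closed: "\<forall>A\<in>Z. \<forall>B\<in>Z. sym_diff A B \<in> Z"
  shows "y \<in> Z \<Longrightarrow> disjoint_union_of (minimal_nonempty Z) y"
proof (induction "card y" arbitrary: y rule: less_induct)
  case (less y)
  show ?case
  proof (cases "y = {}")
    case True
    then show ?thesis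
      unfolding disjoint_union_of_def by (intro exI[of _ "{}"]) auto
  next
    case False
    have fy: "finite y"
      using less.prems Z E finite_subset by blast
    obtain D where D: "D \<in> Z" "D \<noteq> {}" "D \<subseteq> y"
      and least: "\<And>D'. D' \<in> Z \<Longrightarrow> D' \<noteq> {} \<Longrightarrow> D' \<subseteq> y \<Longrightarrow> card D \<le> card D'"
      using ex_has_least_nat[of "\<lambda>D. D \<in> Z \<and> D \<noteq> {} \<and> D \<subseteq> y" y card] less.prems False by blast
    have "D' = D" if "D' \<in> Z" "D' \<noteq> {}" "D' \<subseteq> D" for D'
      using card_seteq[OF finite_subset[OF D(3) fy] that(3)] least[OF that(1,2)] that(3) D(3) by blast
    then have min: "D \<in> minimal_nonempty Z"
      using D(1,2) unfolding minimal_nonempty_def by blast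
    have "sym_diff y D = y - D"
      using D(3) by blast
    then have "y - D \<in> Z"
      using closed less.prems D(1) by metis
    moreover have "card (y - D) < card y"
      using D(2,3) fy by (intro psubset_card_mono) auto
    ultimately have "disjoint_union_of (minimal_nonempty Z) (y - D)"
      using less.hyps by blast
    then obtain \<D> where \<D>: "\<D> \<subseteq> minimal_nonempty Z" "pairwise disjnt \<D>" "\<Union>\<D> = y - D"
      unfolding disjoint_union_of_def by blast
    then have "pairwise disjnt (insert D \<D>)"
      by (auto simp: pairwise_insert disjnt_def)
    moreover have "\<Union>(insert D \<D>) = y"
      using \<D>(3) D(3) by auto
    ultimately show ?thesis
      using \<D>(1) min unfolding disjoint_union_of_def by (intro exI[of _ "insert D \<D>"]) auto
  qed
qed

lemma binary_matroid_minimal_nonempty: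
  assumes E: "finite E" "E \<noteq> {}" and Z: "Z \<subseteq> Pow E" and closed: "\<forall>A\<in>Z. \<forall>B\<in>Z. sym_diff A B \<in> Z"
  shows "binary_matroid E (minimal_nonempty Z)"
proof -
  note decomp = disjoint_union_of_minimal_nonempty[OF E(1) Z closed]
  have sd: "disjoint_union_of (minimal_nonempty Z) (A \<union> B - A \<inter> B)"
    if "A \<in> minimal_nonempty Z" "B \<in> minimal_nonempty Z" for A B
  proof -
    have "A \<union> B - A \<inter> B = sym_diff A B"
      by blast
    with that closed show ?thesis
      using decomp unfolding minimal_nonempty_def by auto
  qed
  have elim: "\<exists>D\<in>minimal_nonempty Z. D \<subseteq> A \<union> B \<and> a \<notin> D \<and> b \<in> D"
    if AB: "A \<in> minimal_nonempty Z" "B \<in> minimal_nonempty Z"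
      and ab: "a \<in> A \<inter> B" "b \<in> A \<union> B - A \<inter> B" for A B a b
  proof -
    obtain \<D> where \<D>: "\<D> \<subseteq> minimal_nonempty Z" "\<Union>\<D> = A \<union> B - A \<inter> B"
      using sd[OF AB] unfolding disjoint_union_of_def by blast
    then obtain D where D: "D \<in> \<D>" "b \<in> D"
      using ab(2) by blast
    then have "D \<in> minimal_nonempty Z" "D \<subseteq> A \<union> B - A \<inter> B"
      using \<D> by blast+
    with D(2) ab(1) show ?thesis
      by (intro bexI[of _ D]) auto
  qed
  have "matroid E (minimal_nonempty Z)"
    unfolding matroid_def
  proof (intro conjI)
    show "minimal_nonempty Z \<subseteq> Pow E"
      using Z unfolding minimal_nonempty_def by blast
    show "\<forall>A\<in>minimal_nonempty Z. \<forall>B\<in>minimal_nonempty Z. A \<subseteq> B \<longrightarrow> A = B"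
      using minimal_nonempty_antichain by blast
    show "\<forall>A\<in>minimal_nonempty Z. \<forall>B\<in>minimal_nonempty Z. \<forall>a\<in>A \<inter> B. \<forall>b\<in>A \<union> B - A \<inter> B.
        \<exists>D\<in>minimal_nonempty Z. D \<subseteq> A \<union> B \<and> a \<notin> D \<and> b \<in> D"
      by (intro ballI elim)
  qed (use E(2) in simp)
  with sd show ?thesis
    unfolding binary_matroid_def disjoint_union_of_def by blast
qed

definition cycles_and_joins :: "'v set \<Rightarrow> 'v set set \<Rightarrow> 'v set \<Rightarrow> 'v set set set" where
  "cycles_and_joins V E T = {y. y \<subseteq> E \<and> odd_vertices V y \<in> {{}, T}}"

lemma sym_diff_cycles_and_joins:
  assumes "finite E" "A \<in> cycles_and_joins V E T" "B \<in> cycles_and_joins V E T"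
  shows "sym_diff A B \<in> cycles_and_joins V E T"
proof -
  have "A \<subseteq> E" "B \<subseteq> E"
    using assms(2,3) by (auto simp: cycles_and_joins_def)
  then have "odd_vertices V (sym_diff A B) = sym_diff (odd_vertices V A) (odd_vertices V B)"
    using assms(1) by (intro odd_vertices_sym_diff) (auto intro: finite_subset)
  with assms(2,3) \<open>A \<subseteq> E\<close> \<open>B \<subseteq> E\<close> show ?thesis
    unfolding cycles_and_joins_def by auto
qed

lemma cycle_edges_minimal_nonempty:
  assumes c: "is_cycle V E vs" and T: "\<not> T \<subseteq> set vs"
  shows "cycle_edges vs \<in> minimal_nonempty (cycles_and_joins V E T)"
proof -
  have "D = cycle_edges vs" if D: "D \<in> cycles_and_joins V E T" "D \<subseteq> cycle_edges vs" "D \<noteq> {}" for D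
  proof -
    have "odd_vertices V D \<noteq> T"
      using odd_vertices_subset_cycle[OF D(2)] T by blast
    then have "\<forall>u\<in>set vs. even (degree D u)"
      using D(1) c unfolding cycles_and_joins_def odd_vertices_def is_cycle_def by auto
    then show ?thesis
      by (rule cycle_edges_minimal[OF c D(2,3)])
  qed
  moreover have "cycle_edges vs \<in> cycles_and_joins V E T"
    using cycle_edges_subset[OF c] odd_vertices_cycle_edges[OF c] unfolding cycles_and_joins_def by simp
  ultimately show ?thesis
    using cycle_edges_nonempty[OF c] unfolding minimal_nonempty_def by blast
qed

lemma nontrivial_circuit_injection_from_join:
  fixes V :: "'v set" and E :: "'v set set"
  assumes g: "simple_graph V E" and x: "x \<subseteq> E" "odd_vertices V x \<noteq> {}"
    and uncovered: "\<And>vs. is_cycle V E vs \<Longrightarrow> \<not> odd_vertices V x \<subseteq> set vs"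
  shows "\<exists>(S :: 'v set set) \<C> f. binary_matroid S \<C> \<and> nontrivial_circuit_injection V E f S \<C>"
proof -
  define Z where "Z = cycles_and_joins V E (odd_vertices V x)"
  have E: "finite E" "E \<noteq> {}"
    using simple_graph_finite_edges[OF g] x by auto
  have Z: "Z \<subseteq> Pow E" "\<forall>A\<in>Z. \<forall>B\<in>Z. sym_diff A B \<in> Z"
    using sym_diff_cycles_and_joins[OF E(1)] unfolding Z_def cycles_and_joins_def by auto
  have circ: "\<forall>C\<in>graph_circuits V E. id ` C \<in> minimal_nonempty Z"
  proof
    fix C
    assume "C \<in> graph_circuits V E"
    then obtain vs where vs: "is_cycle V E vs" "C = cycle_edges vs"
      unfolding graph_circuits_def by blast
    then show "id ` C \<in> minimal_nonempty Z"
      using cycle_edges_minimal_nonempty[OF vs(1) uncovered[OF vs(1)]] unfolding Z_def by simp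
  qed
  have "x \<in> Z"
    using x(1) unfolding Z_def cycles_and_joins_def by simp
  then obtain \<D> where \<D>: "\<D> \<subseteq> minimal_nonempty Z" "pairwise disjnt \<D>" "\<Union>\<D> = x"
    using disjoint_union_of_minimal_nonempty[OF E(1) Z] unfolding disjoint_union_of_def by blast
  have "\<exists>D\<in>\<D>. D \<notin> graph_circuits V E"
  proof (rule ccontr)
    assume "\<not> ?thesis"
    then have "\<forall>D\<in>\<D>. finite D \<and> odd_vertices V D = {}"
      using odd_vertices_graph_circuit graph_circuit_subset E(1) finite_subset by metis
    moreover have "finite \<D>"
      using \<D>(3) x(1) E(1) finite_UnionD finite_subset by metis
    ultimately show False
      using odd_vertices_Union_disjoint[OF _ \<D>(2)] \<D>(3) x(2) by blast
  qed
  then have "nontrivial_circuit_injection V E id E (minimal_nonempty Z)"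
    using circ \<D>(1) unfolding nontrivial_circuit_injection_def circuit_injection_def by auto
  then show ?thesis
    using binary_matroid_minimal_nonempty[OF E Z] by blast
qed

lemma odd_vertices_single_edge:
  assumes g: "simple_graph V E" and e: "{b, c} \<in> E"
  shows "odd_vertices V {{b, c}} = sym_diff {b} {c}"
proof -
  have bc: "b \<noteq> c" "b \<in> V" "c \<in> V"
    using simple_graph_edge[OF g e] by (auto simp: card_2_iff)
  have "{e \<in> {{b, c}}. u \<in> e} = (if u \<in> {b, c} then {{b, c}} else {})" for u
    by auto
  then have "degree {{b, c}} u = (if u \<in> {b, c} then 1 else 0)" for u
    unfolding degree_def by simp
  with bc show ?thesis
    unfolding odd_vertices_def by auto
qed

lemma walk_join:
  assumes g: "simple_graph V E"
  shows "(adjacent E)\<^sup>*\<^sup>* a b \<Longrightarrow> \<exists>J\<subseteq>E. odd_vertices V J = sym_diff {a} {b}"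
proof (induction rule: rtranclp_induct)
  case base
  show ?case
    by (intro exI[of _ "{}"]) simp
next
  case (step b c)
  obtain J where J: "J \<subseteq> E" "odd_vertices V J = sym_diff {a} {b}"
    using step.IH by blast
  have "finite J"
    using J(1) simple_graph_finite_edges[OF g] finite_subset by blast
  then have "odd_vertices V (sym_diff J {{b, c}}) = sym_diff (sym_diff {a} {b}) (sym_diff {b} {c})"
    using odd_vertices_sym_diff[of J "{{b, c}}" V] J(2) odd_vertices_single_edge[OF g step.hyps(2)] by simp
  also have "\<dots> = sym_diff {a} {c}"
    by blast
  finally show ?case
    using J(1) step.hyps(2) by (intro exI[of _ "sym_diff J {{b, c}}"]) auto
qed

lemma even_card_obtain_pair:
  assumes "finite T" "even (card T)" "T \<noteq> {}"
  obtains a b where "a \<in> T" "b \<in> T" "b \<noteq> a" "card T = Suc (Suc (card (T - {a, b})))"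
proof -
  obtain a where a: "a \<in> T"
    using assms(3) by blast
  have "T \<noteq> {a}"
    using assms(2) by auto
  with a obtain b where b: "b \<in> T" "b \<noteq> a"
    by blast
  have "2 \<le> card T"
    using card_mono[OF assms(1), of "{a, b}"] a b by simp
  then have "card T = Suc (Suc (card (T - {a, b})))"
    using a b assms(1) by (simp add: card_Diff_insert)
  with a b show thesis
    by (rule that)
qed

lemma join_exists:
  assumes g: "simple_graph V E" and conn: "\<forall>a\<in>V. \<forall>b\<in>V. (adjacent E)\<^sup>*\<^sup>* a b"
  shows "T \<subseteq> V \<Longrightarrow> even (card T) \<Longrightarrow> \<exists>x\<subseteq>E. odd_vertices V x = T"
proof (induction "card T" arbitrary: T rule: less_induct)
  case (less T)
  have "finite T"
    using less.prems(1) g finite_subset unfolding simple_graph_def by blast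
  show ?case
  proof (cases "T = {}")
    case True
    then show ?thesis
      by (intro exI[of _ "{}"]) simp
  next
    case False
    obtain a b where a: "a \<in> T" and b: "b \<in> T" "b \<noteq> a"
      and card: "card T = Suc (Suc (card (T - {a, b})))"
      by (rule even_card_obtain_pair[OF \<open>finite T\<close> less.prems(2) False])
    define T' where "T' = T - {a, b}"
    from card have "card T = Suc (Suc (card T'))"
      unfolding T'_def .
    then obtain x where x: "x \<subseteq> E" "odd_vertices V x = T'"
      using less.hyps[of T'] less.prems unfolding T'_def by auto
    have "a \<in> V" "b \<in> V"
      using a b less.prems(1) by auto
    then have "(adjacent E)\<^sup>*\<^sup>* a b"
      by (rule conn[rule_format])
    then obtain J where J: "J \<subseteq> E" "odd_vertices V J = sym_diff {a} {b}"
      using walk_join[OF g] by meson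
    have "finite E"
      by (rule simple_graph_finite_edges[OF g])
    then have "odd_vertices V (sym_diff x J) = sym_diff T' (sym_diff {a} {b})"
      using x J by (subst odd_vertices_sym_diff) (auto intro: finite_subset)
    also have "\<dots> = T"
      using a b unfolding T'_def by blast
    finally show ?thesis
      using x(1) J(1) by (intro exI[of _ "sym_diff x J"]) auto
  qed
qed

lemma nontrivial_circuit_injection_if_disconnected:
  fixes V :: "'v set" and E :: "'v set set"
  assumes g: "simple_graph V E" and ni: "no_isolated V E"
    and u: "u \<in> V" and w: "w \<in> V" and apart: "\<not> (adjacent E)\<^sup>*\<^sup>* u w"
  shows "\<exists>(S :: 'v set set) \<C> f. binary_matroid S \<C> \<and> nontrivial_circuit_injection V E f S \<C>"
proof -
  obtain e1 e2 where e: "e1 \<in> E" "u \<in> e1" "e2 \<in> E" "w \<in> e2"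
    using ni u w unfolding no_isolated_def by blast
  obtain u' w' where uw': "e1 = {u, u'}" "e2 = {w, w'}"
    using simple_graph_edge_at[OF g e(1,2)] simple_graph_edge_at[OF g e(3,4)] by blast
  have from_u: "(adjacent E)\<^sup>*\<^sup>* u z" if "z \<in> e1" for z
    using that e(1) uw'(1) by auto
  have to_w: "(adjacent E)\<^sup>*\<^sup>* z w" if "z \<in> e2" for z
    using that e(3) uw'(2) by (auto simp: insert_commute)
  have disj: "e1 \<inter> e2 = {}"
  proof (rule ccontr)
    assume "e1 \<inter> e2 \<noteq> {}"
    then obtain z where "z \<in> e1" "z \<in> e2"
      by blast
    with apart show False
      using rtranclp_trans[OF from_u to_w] by blast
  qed
  define x where "x = {e1, e2}"
  have "{e \<in> x. u \<in> e} = {e1}" "{e \<in> x. w \<in> e} = {e2}"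
    using e disj unfolding x_def by auto
  then have odd: "u \<in> odd_vertices V x" "w \<in> odd_vertices V x"
    using u w unfolding odd_vertices_def degree_def by simp_all
  show ?thesis
  proof (rule nontrivial_circuit_injection_from_join[OF g])
    show "x \<subseteq> E" "odd_vertices V x \<noteq> {}"
      using e odd unfolding x_def by auto
    show "\<not> odd_vertices V x \<subseteq> set vs" if "is_cycle V E vs" for vs
      using cycle_vertices_connected[OF that] odd apart by blast
  qed
qed

lemma nontrivial_circuit_injection_if_uncoverable:
  fixes V :: "'v set" and E :: "'v set set"
  assumes g: "simple_graph V E" and ni: "no_isolated V E"
    and T: "T \<subseteq> V" "T \<noteq> {}" "even (card T)"
    and uncovered: "\<And>vs. is_cycle V E vs \<Longrightarrow> \<not> T \<subseteq> set vs"
  shows "\<exists>(S :: 'v set set) \<C> f. binary_matroid S \<C> \<and> nontrivial_circuit_injection V E f S \<C>"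
proof (cases "\<forall>a\<in>V. \<forall>b\<in>V. (adjacent E)\<^sup>*\<^sup>* a b")
  case True
  then obtain x where "x \<subseteq> E" "odd_vertices V x = T"
    using join_exists[OF g _ T(1,3)] by blast
  with T(2) uncovered show ?thesis
    by (intro nontrivial_circuit_injection_from_join[OF g]) auto
next
  case False
  then show ?thesis
    using nontrivial_circuit_injection_if_disconnected[OF g ni] by blast
qed

lemma two_le_card_vertices:
  assumes g: "simple_graph V E" and "V \<noteq> {}" and "no_isolated V E"
  shows "2 \<le> card V"
proof -
  obtain e where "e \<in> E"
    using assms(2,3) unfolding no_isolated_def by blast
  then have "card e = 2" "e \<subseteq> V"
    using simple_graph_edge[OF g] by auto
  moreover have "finite V"
    using g by (simp add: simple_graph_def)
  ultimately show ?thesis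
    using card_mono by metis
qed

theorem theorem2p2:
  fixes V :: "'v set" and E :: "'v set set"
  assumes "simple_graph V E" and "V \<noteq> {}" and "no_isolated V E"
  shows "(even (card V) \<longrightarrow>
            ((\<not> (\<exists>(S :: 'v set set) \<C> f. binary_matroid S \<C> \<and> nontrivial_circuit_injection V E f S \<C>))
             \<longleftrightarrow> hamiltonian V E)) \<and>
         (odd (card V) \<longrightarrow>
            ((\<not> (\<exists>(S :: 'v set set) \<C> f. binary_matroid S \<C> \<and> nontrivial_circuit_injection V E f S \<C>))
             \<longleftrightarrow> almost_hamiltonian V E))"
proof -
  let ?N = "\<exists>(S :: 'v set set) \<C> f. binary_matroid S \<C> \<and> nontrivial_circuit_injection V E f S \<C>"
  note g = assms(1) and nontrivial = nontrivial_circuit_injection_if_uncoverable[OF g assms(3)]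
  have "?N" if even: "even (card V)" and not_ham: "\<not> hamiltonian V E"
  proof (rule nontrivial)
    show "\<not> V \<subseteq> set vs" if "is_cycle V E vs" for vs
      using that not_ham unfolding hamiltonian_def is_cycle_def by blast
  qed (use assms(2) even in auto)
  moreover have "?N" if odd: "odd (card V)" and not_almost: "\<not> almost_hamiltonian V E"
  proof -
    obtain U where U: "U \<subseteq> V" "card U = card V - 1" "\<And>vs. is_cycle V E vs \<Longrightarrow> \<not> U \<subseteq> set vs"
      using not_almost unfolding almost_hamiltonian_def by blast
    moreover have "U \<noteq> {}" "even (card U)"
      using U(2) odd two_le_card_vertices[OF assms] by auto
    ultimately show ?N
      using nontrivial by blast
  qed
  ultimately show ?thesis
    using hamiltonian_no_nontrivial_circuit_injection[OF g]
      almost_hamiltonian_no_nontrivial_circuit_injection[OF g _ assms(2)] by blast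
qed

end
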